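(* Let $0<q<1$ and write $z=a+\sqrt{-1}\,b$ with $a,b\in\mathbb{R}$. There exist positive constants $c_1=c_1(q)$, $c_2=c_2(q)$ such that: (i) if $a\le-1$, then $|(z;q)_\infty|\ge c_1\exp[c_2\log^2|a|]$; (ii) if $a<1$ and $|b|>1$, then $|(z;q)_\infty|\ge c_1\exp[c_2\log^2|b|]$; (iii) if $a>1$, then $|(z;q)_\infty|\ge c_1\,\max\big(b^2,\,(q^{\alpha-1}-1)(1-q^{\alpha})\big)\exp[c_2\log^2|a|]$, where $\alpha=\lceil\log_{q^{-1}}a\rceil-\log_{q^{-1}}a\in[0,1)$.
   Context: $(z;q)_\infty=\prod_{j\ge0}(1-zq^j)$; $\lceil x\rceil$ is the smallest integer $\ge x$. *)

theory Defs
  imports "HOL-Analysis.Analysis"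
begin

definition qpoch_inf :: "complex \<Rightarrow> real \<Rightarrow> complex" where
  "qpoch_inf z q = (\<Prod>j. (1 - z * complex_of_real q ^ j))"

end

(* Every factor of (z;q)_inf has modulus at least |1 - a q^j| and at least |b| q^j.
   Let y be |a| or |b| and split the product at m ~ log_{1/q} y, where y q^j crosses 1.
   The head factors are at least (a constant multiple of) y q^j, and their product
   y^m q^(m(m-1)/2) is at least exp(log^2 y / (2 log(1/q)) - log y / 2); the tail factors
   are at least 1 - q^(i+1), whose product is bounded below by exp(-1/(1-q)^2).
   For a > 1 the two factors on either side of the crossing a q^j = 1 give the max term.
   Completing the square absorbs the terms linear in log y into the constants. *)

theory Submission
  imports Defs
begin

lemma qpoch_inf_LIMSEQ:
  fixes q :: real
  assumes "0 \<le> q" "q < 1"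
  shows "(\<lambda>n. \<Prod>j<n. 1 - z * complex_of_real q ^ j) \<longlonglongrightarrow> qpoch_inf z q"
proof -
  let ?f = "\<lambda>j. 1 - z * complex_of_real q ^ j"
  have "summable (\<lambda>j. norm (?f j - 1))"
    using assms by (simp add: norm_mult norm_power summable_geometric)
  hence "convergent_prod ?f"
    by (intro abs_convergent_prod_imp_convergent_prod summable_imp_abs_convergent_prod)
  hence "(\<lambda>n. \<Prod>j\<le>n. ?f j) \<longlonglongrightarrow> qpoch_inf z q"
    unfolding qpoch_inf_def by (rule convergent_prod_LIMSEQ)
  thus ?thesis
    using LIMSEQ_lessThan_iff_atMost[of "prod ?f"] by simp
qed

lemma prod_lessThan_add:
  fixes f :: "nat \<Rightarrow> 'a :: comm_monoid_mult"
  shows "(\<Prod>i<m + n. f i) = (\<Prod>i<m. f i) * (\<Prod>i<n. f (m + i))"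
  by (induction n) (simp_all add: mult.assoc)

lemma norm_qpoch_inf_ge_head_tail:
  fixes q :: real
  assumes "0 \<le> q" "q < 1"
    and head: "H \<le> (\<Prod>j<m. norm (1 - z * complex_of_real q ^ j))"
    and tail: "\<And>n. T \<le> (\<Prod>i<n. norm (1 - z * complex_of_real q ^ (m + i)))"
    and "0 \<le> T"
  shows "H * T \<le> norm (qpoch_inf z q)"
proof (rule LIMSEQ_le_const)
  show "(\<lambda>n. norm (\<Prod>j<n. 1 - z * complex_of_real q ^ j)) \<longlonglongrightarrow> norm (qpoch_inf z q)"
    using qpoch_inf_LIMSEQ[OF assms(1,2)] by (rule tendsto_norm)
  show "\<exists>N. \<forall>n\<ge>N. H * T \<le> norm (\<Prod>j<n. 1 - z * complex_of_real q ^ j)"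
  proof (intro exI allI impI)
    fix n assume "m \<le> n"
    then obtain k where n: "n = m + k" by (metis le_add_diff_inverse)
    have "H * T \<le> (\<Prod>j<m. norm (1 - z * complex_of_real q ^ j))
                   * (\<Prod>i<k. norm (1 - z * complex_of_real q ^ (m + i)))"
      using head tail \<open>0 \<le> T\<close> by (intro mult_mono) (auto intro: prod_nonneg)
    thus "H * T \<le> norm (\<Prod>j<n. 1 - z * complex_of_real q ^ j)"
      by (simp add: n prod_norm norm_mult prod_lessThan_add)
  qed
qed

lemma norm_qpoch_factor_ge_Re:
  "\<bar>1 - a * q ^ j\<bar> \<le> norm (1 - Complex a b * complex_of_real q ^ j)"
  using abs_Re_le_cmod[of "1 - Complex a b * complex_of_real q ^ j"] by (simp flip: of_real_power)

lemma norm_qpoch_factor_ge_Im: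
  "0 \<le> q \<Longrightarrow> \<bar>b\<bar> * q ^ j \<le> norm (1 - Complex a b * complex_of_real q ^ j)"
  using abs_Im_le_cmod[of "1 - Complex a b * complex_of_real q ^ j"]
  by (simp add: abs_mult flip: of_real_power)

lemma sum_lessThan_real_of_nat:
  "(\<Sum>j<m. real j) = real m * (real m - 1) / 2"
  by (induction m) (simp_all add: algebra_simps)

lemma prod_geometric_ge_exp_square:
  fixes q y :: real
  assumes q: "0 < q" "q < 1" and y: "1 \<le> y"
    and m: "\<bar>real m - ln y / ln (1/q)\<bar> \<le> 1"
  shows "exp ((ln y)^2 / (2 * ln (1/q)) - ln y / 2) \<le> (\<Prod>j<m. y * q ^ j)"
proof -
  define l where "l = ln (1/q)"
  define u where "u = ln y / l"
  have l: "l > 0" using q by (simp add: l_def)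
  have u: "u \<ge> 0" using y l by (simp add: u_def)
  have ln_y: "ln y = l * u" using l by (simp add: u_def)
  have "(\<Prod>j<m. y * q ^ j) = (\<Prod>j<m. exp (ln y - l * real j))"
  proof (intro prod.cong refl)
    fix j
    have "q ^ j = exp (- l * real j)"
      using q by (simp add: l_def ln_div powr_def flip: powr_realpow)
    thus "y * q ^ j = exp (ln y - l * real j)"
      using y by (simp add: exp_diff exp_minus field_simps)
  qed
  also have "\<dots> = exp (real m * ln y - l * (real m * (real m - 1) / 2))"
    by (simp add: exp_sum[symmetric] sum_subtractf sum_distrib_left[symmetric]
        sum_lessThan_real_of_nat)
  finally have prod_eq: "(\<Prod>j<m. y * q ^ j) = \<dots>" .
  have "(real m - u)^2 = \<bar>real m - u\<bar> * \<bar>real m - u\<bar>" by (simp add: power2_eq_square)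
  also have "\<dots> \<le> \<bar>real m - u\<bar> * 1"
    using m by (intro mult_left_mono) (simp_all add: u_def l_def)
  also have "\<dots> \<le> real m + u" using u by (cases "u \<le> real m") auto
  finally have "(real m - u)^2 \<le> real m + u" .
  hence "l * (u * u - u) \<le> l * (2 * real m * u - real m * (real m - 1))"
    using l by (intro mult_left_mono) (simp_all add: power2_eq_square algebra_simps)
  hence "(ln y)^2 / (2 * l) - ln y / 2 \<le> real m * ln y - l * (real m * (real m - 1) / 2)"
    using l by (simp add: ln_y power2_eq_square field_simps)
  thus ?thesis by (simp add: prod_eq l_def)
qed

lemma prod_ge_exp_square:
  fixes q y c :: real
  assumes q: "0 < q" "q < 1" and y: "1 \<le> y"
    and m: "\<bar>real m - ln y / ln (1/q)\<bar> \<le> 1"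
    and c: "0 \<le> c" and g: "\<And>j. j < m \<Longrightarrow> c * (y * q ^ j) \<le> g j"
  shows "c ^ m * exp ((ln y)^2 / (2 * ln (1/q)) - ln y / 2) \<le> (\<Prod>j<m. g j)"
proof -
  have "c ^ m * exp ((ln y)^2 / (2 * ln (1/q)) - ln y / 2) \<le> c ^ m * (\<Prod>j<m. y * q ^ j)"
    using prod_geometric_ge_exp_square[OF q y m] c by (intro mult_left_mono) auto
  also have "\<dots> = (\<Prod>j<m. c * (y * q ^ j))" by (simp add: prod.distrib)
  also have "\<dots> \<le> (\<Prod>j<m. g j)"
    using g q y c by (intro prod_mono) auto
  finally show ?thesis .
qed

lemma exp_neg_div_le_one_minus:
  fixes q x :: real
  assumes "q < 1" "0 \<le> x" "x \<le> q"
  shows "exp (- x / (1 - q)) \<le> 1 - x"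
proof -
  define y where "y = x / (1 - q)"
  have y: "y \<ge> 0" using assms by (simp add: y_def)
  have "exp (- y) \<le> 1 / (1 + y)"
    using exp_ge_add_one_self[of y] y by (simp add: exp_minus field_simps)
  also have "1 \<le> (1 - x) * (1 + y)"
    using mult_left_mono[of "1 - q" "1 - x" x] assms by (simp add: y_def field_simps)
  hence "1 / (1 + y) \<le> 1 - x" using y by (simp add: field_simps)
  finally show ?thesis by (simp add: y_def)
qed

lemma prod_one_minus_ge_exp:
  fixes q :: real
  assumes q: "0 < q" "q < 1" and x: "\<And>i. i < n \<Longrightarrow> 0 \<le> x i \<and> x i \<le> q ^ Suc i"
  shows "exp (- 1 / (1 - q)^2) \<le> (\<Prod>i<n. 1 - x i)"
proof -
  have "(\<Sum>i<n. x i) \<le> (\<Sum>i<n. q ^ Suc i)" using x by (intro sum_mono) auto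
  also have "\<dots> = q * ((1 - q ^ n) / (1 - q))"
    using q by (simp only: power_Suc sum_distrib_left[symmetric] sum_gp_strict) simp
  also have "\<dots> \<le> 1 / (1 - q)"
    using q mult_le_one[of q "1 - q ^ n"] by (simp add: power_le_one divide_right_mono)
  finally have "(\<Sum>i<n. x i) / (1 - q) \<le> 1 / (1 - q)^2"
    using q divide_right_mono[of _ "1 / (1 - q)" "1 - q"] by (simp add: power2_eq_square)
  hence "exp (- 1 / (1 - q)^2) \<le> (\<Prod>i<n. exp (- x i / (1 - q)))"
    by (simp add: exp_sum[symmetric] sum_negf sum_divide_distrib)
  also have "\<dots> \<le> (\<Prod>i<n. 1 - x i)"
  proof (intro prod_mono conjI)
    fix i assume "i \<in> {..<n}"
    hence "0 \<le> x i" "x i \<le> q ^ Suc i" using x by auto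
    moreover have "q ^ Suc i \<le> q" using q by (simp add: power_le_one)
    ultimately have "x i \<le> q" by linarith
    thus "exp (- x i / (1 - q)) \<le> 1 - x i"
      using q \<open>0 \<le> x i\<close> by (intro exp_neg_div_le_one_minus) auto
  qed simp
  finally show ?thesis .
qed

lemma exp_square_completion:
  fixes l s \<sigma> t :: real
  assumes l: "l > 0" and \<sigma>: "\<bar>\<sigma>\<bar> \<le> s"
  shows "exp (- (s^2) * l) * exp (t^2 / (4 * l)) \<le> exp (t^2 / (2 * l) - \<sigma> * t)"
proof -
  have "\<sigma>^2 \<le> s^2" using power_mono[OF \<sigma> abs_ge_zero, of 2] by simp
  hence "- (s^2) * l + t^2 / (4 * l) \<le> - (\<sigma>^2) * l + t^2 / (4 * l)" using l by simp
  also have "\<dots> \<le> - (\<sigma>^2) * l + t^2 / (4 * l) + (t / (2 * l) - \<sigma>)^2 * l" using l by simp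
  also have "\<dots> = t^2 / (2 * l) - \<sigma> * t"
    using l by (simp add: power2_eq_square field_simps)
  finally show ?thesis by (simp add: mult_exp_exp)
qed

lemma le_by_exp_square_completion:
  fixes l s \<sigma> t c X D N :: real
  assumes l: "l > 0" and \<sigma>: "\<bar>\<sigma>\<bar> \<le> s" and c: "0 \<le> c" "0 \<le> X" "c * X \<le> D"
    and N: "D * exp (t^2 / (2 * l) - \<sigma> * t) \<le> N"
  shows "c * exp (- (s^2) * l) * X * exp (1 / (4 * l) * t^2) \<le> N"
proof -
  have "c * exp (- (s^2) * l) * X * exp (1 / (4 * l) * t^2)
        = (c * X) * (exp (- (s^2) * l) * exp (t^2 / (4 * l)))" by (simp add: mult_ac)
  also have "\<dots> \<le> D * exp (t^2 / (2 * l) - \<sigma> * t)"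
  proof (rule mult_mono)
    show "0 \<le> D" using mult_nonneg_nonneg[OF c(1,2)] c(3) by linarith
  qed (use c exp_square_completion[OF l \<sigma>] in auto)
  finally show ?thesis using N by linarith
qed

lemma norm_qpoch_inf_ge_Re_le_neg_one:
  fixes q a b :: real
  assumes q: "0 < q" "q < 1" and a: "a \<le> -1"
  shows "exp ((ln \<bar>a\<bar>)^2 / (2 * ln (1/q)) - ln \<bar>a\<bar> / 2) \<le> norm (qpoch_inf (Complex a b) q)"
proof -
  define u where "u = ln \<bar>a\<bar> / ln (1/q)"
  have "u \<ge> 0" using q a by (simp add: u_def)
  hence m: "\<bar>real (nat \<lfloor>u\<rfloor>) - u\<bar> \<le> 1" by linarith
  have factor: "1 + \<bar>a\<bar> * q ^ j \<le> norm (1 - Complex a b * complex_of_real q ^ j)" for j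
    using norm_qpoch_factor_ge_Re[of a q j b] a by simp
  have "1 ^ nat \<lfloor>u\<rfloor> * exp ((ln \<bar>a\<bar>)^2 / (2 * ln (1/q)) - ln \<bar>a\<bar> / 2)
        \<le> (\<Prod>j<nat \<lfloor>u\<rfloor>. norm (1 - Complex a b * complex_of_real q ^ j))"
    using q a m factor
    by (intro prod_ge_exp_square) (auto simp: u_def intro: order_trans[OF _ factor])
  moreover have "1 \<le> (\<Prod>i<n. norm (1 - Complex a b * complex_of_real q ^ (nat \<lfloor>u\<rfloor> + i)))" for n
    using factor q by (intro prod_ge_1) (auto intro: order_trans[OF _ factor])
  ultimately show ?thesis
    using norm_qpoch_inf_ge_head_tail[where m = "nat \<lfloor>u\<rfloor>" and T = 1] q by simp
qed

lemma norm_qpoch_inf_ge_Im_gt_one: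
  fixes q a b :: real
  assumes q: "0 < q" "q < 1" and a: "a < 1" and b: "\<bar>b\<bar> > 1"
  shows "exp ((ln \<bar>b\<bar>)^2 / (2 * ln (1/q)) - ln \<bar>b\<bar> / 2) * exp (- 1 / (1 - q)^2)
           \<le> norm (qpoch_inf (Complex a b) q)"
proof -
  define u where "u = ln \<bar>b\<bar> / ln (1/q)"
  \<comment> \<open>m \<ge> 1 keeps every tail factor 1 - q^(m+i) above 1 - q^(i+1).\<close>
  define m where "m = Suc (nat \<lfloor>u\<rfloor>)"
  have "u \<ge> 0" using q b by (simp add: u_def)
  hence m: "\<bar>real m - u\<bar> \<le> 1" by (simp add: m_def) linarith
  have "1 ^ m * exp ((ln \<bar>b\<bar>)^2 / (2 * ln (1/q)) - ln \<bar>b\<bar> / 2)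
        \<le> (\<Prod>j<m. norm (1 - Complex a b * complex_of_real q ^ j))"
    using q b m norm_qpoch_factor_ge_Im by (intro prod_ge_exp_square) (auto simp: u_def)
  moreover have "exp (- 1 / (1 - q)^2)
                   \<le> (\<Prod>i<n. norm (1 - Complex a b * complex_of_real q ^ (m + i)))" for n
  proof -
    have "exp (- 1 / (1 - q)^2) \<le> (\<Prod>i<n. 1 - q ^ (m + i))"
      using q by (intro prod_one_minus_ge_exp) (auto simp: m_def power_decreasing)
    also have "\<dots> \<le> (\<Prod>i<n. norm (1 - Complex a b * complex_of_real q ^ (m + i)))"
    proof (intro prod_mono conjI)
      fix i
      have "a * q ^ (m + i) \<le> 1 * q ^ (m + i)" using q a by (intro mult_right_mono) auto
      thus "1 - q ^ (m + i) \<le> norm (1 - Complex a b * complex_of_real q ^ (m + i))"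
        using norm_qpoch_factor_ge_Re[of a q "m + i" b] by linarith
      show "0 \<le> 1 - q ^ (m + i)" using q by (simp add: power_le_one)
    qed
    finally show ?thesis .
  qed
  ultimately show ?thesis
    using norm_qpoch_inf_ge_head_tail[where m = m] q by simp
qed

lemma norm_qpoch_factor_pair_ge:
  fixes q a b :: real
  assumes q: "0 < q" "q < 1" and a: "1 \<le> a"
    and m: "1 \<le> a * q ^ m" "q \<le> a * q ^ Suc m" "a * q ^ Suc m \<le> 1"
  shows "max (b^2) ((a * q ^ m - 1) * (1 - a * q ^ Suc m)) * (q / a)^2
           \<le> norm (1 - Complex a b * complex_of_real q ^ m)
             * norm (1 - Complex a b * complex_of_real q ^ Suc m)"
    (is "max (b^2) ?P * ?c \<le> ?g * ?g'")
proof -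
  have "0 < a" "q / a \<le> 1" using q a by (simp_all add: divide_le_eq)
  hence c: "0 \<le> ?c" "?c \<le> 1" using q \<open>0 < a\<close> by (auto simp: power_le_one)
  have P: "?P \<le> ?g * ?g'"
    using norm_qpoch_factor_ge_Re[of a q m b] norm_qpoch_factor_ge_Re[of a q "Suc m" b] m
    by (intro mult_mono) auto
  have "q / a \<le> q ^ Suc m" using m(2) \<open>0 < a\<close> by (simp add: divide_le_eq mult.commute)
  moreover have "q ^ Suc m \<le> q ^ m" using q by (simp add: power_decreasing)
  ultimately have "\<bar>b\<bar> * (q / a) \<le> \<bar>b\<bar> * q ^ m" "\<bar>b\<bar> * (q / a) \<le> \<bar>b\<bar> * q ^ Suc m"
    by (intro mult_left_mono; linarith)+
  hence "(\<bar>b\<bar> * (q / a)) * (\<bar>b\<bar> * (q / a)) \<le> (\<bar>b\<bar> * q ^ m) * (\<bar>b\<bar> * q ^ Suc m)"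
    by (rule mult_mono) (use q \<open>0 < a\<close> in auto)
  hence "b^2 * ?c \<le> (\<bar>b\<bar> * q ^ m) * (\<bar>b\<bar> * q ^ Suc m)"
    by (simp add: power2_eq_square power_mult_distrib mult_ac)
  also have "\<dots> \<le> ?g * ?g'"
    using norm_qpoch_factor_ge_Im[of q b m a] norm_qpoch_factor_ge_Im[of q b "Suc m" a] q
    by (intro mult_mono) auto
  finally have "b^2 * ?c \<le> ?g * ?g'" .
  moreover have "?P * ?c \<le> ?g * ?g'"
    using P c mult_left_le[of ?c ?P] m by (simp add: mult_nonneg_nonneg)
  ultimately show ?thesis by (simp add: max_def)
qed

lemma norm_qpoch_inf_ge_crossing_index:
  fixes q a b :: real
  assumes q: "0 < q" "q < 1" and a: "1 \<le> a"
    and m: "1 \<le> a * q ^ m" "q \<le> a * q ^ Suc m" "a * q ^ Suc m \<le> 1"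
    and u: "\<bar>real m - ln a / ln (1/q)\<bar> \<le> 1"
  shows "(1 - q) ^ m * exp ((ln a)^2 / (2 * ln (1/q)) - ln a / 2)
           * (max (b^2) ((a * q ^ m - 1) * (1 - a * q ^ Suc m)) * (q / a)^2)
           * exp (- 1 / (1 - q)^2)
         \<le> norm (qpoch_inf (Complex a b) q)"
proof -
  define g where "g j = norm (1 - Complex a b * complex_of_real q ^ j)" for j
  have head: "(1 - q) * (a * q ^ j) \<le> g j" if "j < m" for j
  proof -
    have "a * q ^ m \<le> a * q ^ Suc j"
      using q a that by (intro mult_left_mono power_decreasing) auto
    hence "1 \<le> a * q ^ Suc j" using m(1) by linarith
    hence "(1 - q) * (a * q ^ j) \<le> \<bar>1 - a * q ^ j\<bar>" by (simp add: algebra_simps)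
    thus ?thesis using norm_qpoch_factor_ge_Re[of a q j b] by (simp add: g_def)
  qed
  have "(1 - q) ^ m * exp ((ln a)^2 / (2 * ln (1/q)) - ln a / 2)
          * (max (b^2) ((a * q ^ m - 1) * (1 - a * q ^ Suc m)) * (q / a)^2)
        \<le> (\<Prod>j<m. g j) * (g m * g (Suc m))"
  proof (rule mult_mono)
    show "(1 - q) ^ m * exp ((ln a)^2 / (2 * ln (1/q)) - ln a / 2) \<le> (\<Prod>j<m. g j)"
      using q head by (intro prod_ge_exp_square[OF q a u]) auto
    show "max (b^2) ((a * q ^ m - 1) * (1 - a * q ^ Suc m)) * (q / a)^2 \<le> g m * g (Suc m)"
      unfolding g_def by (rule norm_qpoch_factor_pair_ge[OF q a m])
  qed (auto simp: g_def prod_nonneg le_max_iff_disj)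
  also have "\<dots> = (\<Prod>j<Suc (Suc m). g j)" by (simp add: mult.assoc)
  moreover have "exp (- 1 / (1 - q)^2) \<le> (\<Prod>i<n. g (Suc (Suc m) + i))" for n
  proof -
    have x: "a * q ^ (Suc (Suc m) + i) = (a * q ^ Suc m) * q ^ Suc i" for i
      by (simp add: power_add mult_ac)
    have x_bound:
      "0 \<le> a * q ^ (Suc (Suc m) + i) \<and> a * q ^ (Suc (Suc m) + i) \<le> q ^ Suc i" for i
    proof
      have "0 \<le> a * q ^ Suc m" using q m(2) by linarith
      thus "0 \<le> a * q ^ (Suc (Suc m) + i)" unfolding x using q by simp
      show "a * q ^ (Suc (Suc m) + i) \<le> q ^ Suc i"
        unfolding x using q mult_right_mono[OF m(3), of "q ^ Suc i"] by simp
    qed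
    have "exp (- 1 / (1 - q)^2) \<le> (\<Prod>i<n. 1 - a * q ^ (Suc (Suc m) + i))"
      using q x_bound by (intro prod_one_minus_ge_exp) auto
    also have "\<dots> \<le> (\<Prod>i<n. g (Suc (Suc m) + i))"
    proof (intro prod_mono conjI)
      fix i
      show "0 \<le> 1 - a * q ^ (Suc (Suc m) + i)"
        using x_bound[of i] power_le_one[of q "Suc i"] q by linarith
      thus "1 - a * q ^ (Suc (Suc m) + i) \<le> g (Suc (Suc m) + i)"
        using norm_qpoch_factor_ge_Re[of a q "Suc (Suc m) + i" b] by (simp add: g_def)
    qed
    finally show ?thesis .
  qed
  ultimately show ?thesis
    using norm_qpoch_inf_ge_head_tail[where m = "Suc (Suc m)"] q unfolding g_def by simp
qed

lemma mult_power_ceiling_log: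
  fixes q a :: real
  assumes q: "0 < q" "q < 1" and a: "1 < a"
  shows "a * q ^ nat (\<lceil>log (1/q) a\<rceil> - 1) = q powr (\<lceil>log (1/q) a\<rceil> - log (1/q) a - 1)"
proof -
  define u where "u = log (1/q) a"
  have "0 < u" using q a by (simp add: u_def)
  hence "real (nat (\<lceil>u\<rceil> - 1)) = \<lceil>u\<rceil> - 1" by (simp add: of_nat_nat)
  hence "q ^ nat (\<lceil>u\<rceil> - 1) = q powr (\<lceil>u\<rceil> - 1)" using q by (simp flip: powr_realpow)
  moreover have "a = q powr (- u)"
    using q a powr_log_cancel[of "1/q" a] by (simp add: u_def powr_divide powr_minus_divide)
  ultimately have "a * q ^ nat (\<lceil>u\<rceil> - 1) = q powr (- u) * q powr (\<lceil>u\<rceil> - 1)" by simp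
  also have "\<dots> = q powr (\<lceil>u\<rceil> - u - 1)" by (simp add: powr_add[symmetric] algebra_simps)
  finally show ?thesis by (simp add: u_def)
qed

lemma norm_qpoch_inf_ge_Re_gt_one:
  fixes q a b :: real
  assumes q: "0 < q" "q < 1" and a: "1 < a"
  defines "\<alpha> \<equiv> real_of_int \<lceil>log (1/q) a\<rceil> - log (1/q) a"
  shows "q^2 * exp (- 1 / (1 - q)^2) * max (b^2) ((q powr (\<alpha> - 1) - 1) * (1 - q powr \<alpha>))
           * exp ((ln a)^2 / (2 * ln (1/q)) - (5/2 + ln (1/(1 - q)) / ln (1/q)) * ln a)
         \<le> norm (qpoch_inf (Complex a b) q)"
proof -
  define u where "u = log (1/q) a"
  define m where "m = nat (\<lceil>u\<rceil> - 1)"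
  define M where "M = max (b^2) ((q powr (\<alpha> - 1) - 1) * (1 - q powr \<alpha>))"
  have u: "u = ln a / ln (1/q)" by (simp add: u_def log_def)
  have "0 < u" using q a by (simp add: u_def)
  hence m_eq: "real m = u + \<alpha> - 1" by (simp add: m_def \<alpha>_def u_def of_nat_nat)
  have \<alpha>: "0 \<le> \<alpha>" "\<alpha> < 1" unfolding \<alpha>_def by linarith+
  have am: "a * q ^ m = q powr (\<alpha> - 1)"
    using mult_power_ceiling_log[OF q a] by (simp add: m_def u_def \<alpha>_def)
  have "a * q ^ Suc m = (a * q ^ m) * q powr 1" using q by (simp add: mult_ac)
  hence am1: "a * q ^ Suc m = q powr \<alpha>" by (simp only: am powr_add[symmetric]) simp
  have "q powr 0 \<le> q powr (\<alpha> - 1)" "q powr 1 \<le> q powr \<alpha>" "q powr \<alpha> \<le> q powr 0"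
    using q \<alpha> by (intro powr_mono'; simp)+
  hence crossing: "1 \<le> a * q ^ m" "q \<le> a * q ^ Suc m" "a * q ^ Suc m \<le> 1"
    unfolding am am1 using q by simp_all
  have "(1 - q) powr u \<le> (1 - q) ^ m"
    using q \<alpha> m_eq powr_mono'[of "real m" u "1 - q"] powr_realpow[of "1 - q" m] by simp
  also have "(1 - q) powr u = exp (- (ln (1/(1 - q)) / ln (1/q)) * ln a)"
    using q by (simp add: powr_def u ln_div)
  finally have head: "exp (- (ln (1/(1 - q)) / ln (1/q)) * ln a) \<le> (1 - q) ^ m" .
  have "exp (-2 * ln a) = inverse (exp (ln a) * exp (ln a))"
    by (simp add: exp_minus[symmetric] mult_exp_exp)
  hence "(q / a)^2 = q^2 * exp (-2 * ln a)"
    using a by (simp add: power2_eq_square divide_inverse)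
  hence "q^2 * exp (- 1 / (1 - q)^2) * M
           * exp ((ln a)^2 / (2 * ln (1/q)) - (5/2 + ln (1/(1 - q)) / ln (1/q)) * ln a)
         = exp (- (ln (1/(1 - q)) / ln (1/q)) * ln a) * exp ((ln a)^2 / (2 * ln (1/q)) - ln a / 2)
           * (M * (q / a)^2) * exp (- 1 / (1 - q)^2)"
    by (simp add: mult_exp_exp algebra_simps)
  also have "\<dots> \<le> (1 - q) ^ m * exp ((ln a)^2 / (2 * ln (1/q)) - ln a / 2)
           * (M * (q / a)^2) * exp (- 1 / (1 - q)^2)"
    using head by (intro mult_right_mono) (auto simp: M_def le_max_iff_disj)
  also have "\<dots> \<le> norm (qpoch_inf (Complex a b) q)"
    using norm_qpoch_inf_ge_crossing_index[OF q _ crossing, of b] a m_eq \<alpha>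
    unfolding M_def am am1 by (simp add: u)
  finally show ?thesis by (simp add: M_def)
qed

theorem lemmaC1:
  fixes q :: real
  assumes "0 < q" "q < 1"
  shows "\<exists>c1 > 0. \<exists>c2 > 0. \<forall>a b :: real.
     (a \<le> -1 \<longrightarrow>
        norm (qpoch_inf (Complex a b) q) \<ge> c1 * exp (c2 * (ln \<bar>a\<bar>)^2)) \<and>
     (a < 1 \<and> \<bar>b\<bar> > 1 \<longrightarrow>
        norm (qpoch_inf (Complex a b) q) \<ge> c1 * exp (c2 * (ln \<bar>b\<bar>)^2)) \<and>
     (a > 1 \<longrightarrow>
        (let \<alpha> = real_of_int \<lceil>log (1/q) a\<rceil> - log (1/q) a in
          norm (qpoch_inf (Complex a b) q) \<ge>
            c1 * max (b^2) ((q powr (\<alpha> - 1) - 1) * (1 - q powr \<alpha>))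
               * exp (c2 * (ln \<bar>a\<bar>)^2)))"
proof -
  note q = assms
  define l where "l = ln (1/q)"
  define s where "s = 5/2 + ln (1/(1 - q)) / l"
  define C where "C = q^2 * exp (- 1 / (1 - q)^2)"
  have l: "l > 0" using q by (simp add: l_def)
  have s: "5/2 \<le> s" using q l by (simp add: s_def)
  have "C \<le> exp (- 1 / (1 - q)^2)"
    using q mult_right_mono[of "q^2" 1 "exp (- 1 / (1 - q)^2)"] by (simp add: C_def power_le_one)
  moreover have "exp (- 1 / (1 - q)^2) \<le> 1" by simp
  moreover have "0 \<le> C" by (simp add: C_def)
  ultimately have C: "0 \<le> C" "C \<le> 1" "C \<le> exp (- 1 / (1 - q)^2)" by linarith+
  show ?thesis
  proof (rule exI[of _ "C * exp (- (s^2) * l)"], intro conjI exI[of _ "1 / (4 * l)"] allI impI)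
    fix a b :: real
    show "a \<le> -1 \<Longrightarrow> C * exp (- (s^2) * l) * exp (1 / (4 * l) * (ln \<bar>a\<bar>)^2)
                       \<le> norm (qpoch_inf (Complex a b) q)"
      using le_by_exp_square_completion[OF l _ C(1), where \<sigma> = "1/2" and s = s and X = 1 and D = 1]
        norm_qpoch_inf_ge_Re_le_neg_one[OF q] C s by (simp add: l_def)
    show "a < 1 \<and> 1 < \<bar>b\<bar> \<Longrightarrow> C * exp (- (s^2) * l) * exp (1 / (4 * l) * (ln \<bar>b\<bar>)^2)
                       \<le> norm (qpoch_inf (Complex a b) q)"
      using le_by_exp_square_completion[OF l _ C(1), where \<sigma> = "1/2" and s = s and X = 1
          and D = "exp (- 1 / (1 - q)^2)"]
        norm_qpoch_inf_ge_Im_gt_one[OF q] C s by (simp add: l_def mult.commute)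
    show "1 < a \<Longrightarrow> let \<alpha> = real_of_int \<lceil>log (1/q) a\<rceil> - log (1/q) a in
            C * exp (- (s^2) * l) * max (b^2) ((q powr (\<alpha> - 1) - 1) * (1 - q powr \<alpha>))
              * exp (1 / (4 * l) * (ln \<bar>a\<bar>)^2) \<le> norm (qpoch_inf (Complex a b) q)"
    proof -
      assume a: "1 < a"
      define M where "M = (let \<alpha> = real_of_int \<lceil>log (1/q) a\<rceil> - log (1/q) a in
                             max (b^2) ((q powr (\<alpha> - 1) - 1) * (1 - q powr \<alpha>)))"
      have "C * M * exp ((ln a)^2 / (2 * l) - s * ln a) \<le> norm (qpoch_inf (Complex a b) q)"
        using norm_qpoch_inf_ge_Re_gt_one[OF q a, of b]
        by (simp add: M_def C_def l_def s_def Let_def)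
      hence "C * exp (- (s^2) * l) * M * exp (1 / (4 * l) * (ln a)^2)
               \<le> norm (qpoch_inf (Complex a b) q)"
        using s by (intro le_by_exp_square_completion[OF l _ C(1) _ order.refl])
          (auto simp: M_def Let_def le_max_iff_disj)
      thus ?thesis using a by (simp add: Let_def M_def)
    qed
  qed (use q l in \<open>simp_all add: C_def\<close>)
qed

end
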